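(* For every non-negative integer vector ${\bf v}=(v_1,\dots,v_{n+1})$ we have $f_{\bf v}(t)\le F_{\bf v}(t)$ for all $t\ge0$, with equality for all $t\ge 0$ if ${\bf v}$ is GMS.
   Context: Binomial convention: $\binom{a}{k}=0$ if $a<k$. $f_{\bf v}(t)=\sum_{i=0}^{n}\binom{\min(t-i+1,v_{i+1})}{1}$, $F_{\bf v}(t)=\min_{0\le i\le n+1}\big(\binom{t+2}{2}-\binom{t-i+2}{2}+\sum_{j=i+1}^{n+1}v_j\big)$. A non-negative, non-increasing integer vector ${\bf v}$ is GMS if $v_i-v_j\ge j-i-1$ for all $i<j$. *)

theory Defs
  imports Main
begin

definition binomc :: "int \<Rightarrow> nat \<Rightarrow> int" where
  "binomc a k = (if a < int k then 0 else int (nat a choose k))"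

text \<open>The vector v = (v_1,...,v_{n+1}) is the function v restricted to indices 1..n+1.\<close>
definition f_v :: "nat \<Rightarrow> (nat \<Rightarrow> nat) \<Rightarrow> int \<Rightarrow> int" where
  "f_v n v t = (\<Sum>i=0..n. binomc (min (t - int i + 1) (int (v (i+1)))) 1)"

definition F_v :: "nat \<Rightarrow> (nat \<Rightarrow> nat) \<Rightarrow> int \<Rightarrow> int" where
  "F_v n v t = Min ((\<lambda>i. binomc (t + 2) 2 - binomc (t - int i + 2) 2
                       + (\<Sum>j=i+1..n+1. int (v j))) ` {0..n+1})"

text \<open>GMS: non-increasing (non-negativity is automatic for nat entries) and
  v_i - v_j >= j - i - 1 for all 1 <= i < j <= n+1.\<close>
definition GMS :: "nat \<Rightarrow> (nat \<Rightarrow> nat) \<Rightarrow> bool" where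
  "GMS n v \<longleftrightarrow> (\<forall>i j. 1 \<le> i \<and> i < j \<and> j \<le> n + 1 \<longrightarrow>
      v j \<le> v i \<and> int (v i) - int (v j) \<ge> int j - int i - 1)"

end

theory Submission
  imports Defs
begin

text \<open>
  Write the summands of f_v as max (min (t+1-k) v_{k+1}) 0, and rewrite each
  candidate in the minimum defining F_v, by telescoping binom(.,2), as
    C_i(t) = \<Sum>_{k<i} max (t+1-k) 0 + \<Sum>_{k=i..n} v_{k+1}.
  Splitting the sum for f_v at i and bounding min by either argument gives
  f_v \<le> C_i for every i, hence f_v \<le> F_v.
  For equality it suffices to find one index i for which the split is exact,
  i.e. the slack g_k = v_{k+1} - (t+1-k) is \<ge> 0 before i and \<le> 0 from i on.
  The GMS condition says that g increases by at most one per step, so g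
  cannot return from a negative value to a positive one; a general lemma on
  such integer sequences provides the crossing index.
\<close>

lemma binomc_one: "binomc a 1 = max a 0"
  by (simp add: binomc_def)

lemma binomc_two: "binomc a 2 = int (nat a choose 2)"
proof (cases "a < 2")
  case True
  then have "nat a < 2" by simp
  then show ?thesis by (simp add: binomc_def binomial_eq_0)
qed (simp add: binomc_def)

lemma binomc_two_step: "binomc (a + 1) 2 - binomc a 2 = max a 0"
proof (cases "a \<ge> 0")
  case True
  then have "nat (a + 1) choose 2 = (nat a choose 2) + nat a"
    by (simp add: nat_add_distrib numeral_2_eq_2)
  then show ?thesis using True by (simp add: binomc_two)
next
  case False
  then show ?thesis by (simp add: binomc_two)
qed

lemma binomc_two_diff:
  "binomc (t + 2) 2 - binomc (t - int i + 2) 2 = (\<Sum>k<i. max (t + 1 - int k) 0)"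
proof (induction i)
  case (Suc i)
  have "binomc (t - int i + 2) 2 - binomc (t - int (Suc i) + 2) 2 = max (t + 1 - int i) 0"
    using binomc_two_step[of "t - int (Suc i) + 2"] by (simp add: algebra_simps)
  then show ?case using Suc by simp
qed simp

definition cand :: "nat \<Rightarrow> (nat \<Rightarrow> nat) \<Rightarrow> int \<Rightarrow> nat \<Rightarrow> int" where
  "cand n v t i = (\<Sum>k<i. max (t + 1 - int k) 0) + (\<Sum>k=i..n. int (v (k + 1)))"

lemma F_v_eq_Min_cand: "F_v n v t = Min (cand n v t ` {0..n+1})"
proof -
  have "binomc (t + 2) 2 - binomc (t - int i + 2) 2 + (\<Sum>j=i+1..n+1. int (v j)) = cand n v t i"
    for i
    using binomc_two_diff[of t i] sum.shift_bounds_cl_Suc_ivl[of "\<lambda>j. int (v j)" i n]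
    by (simp add: cand_def)
  then show ?thesis unfolding F_v_def by simp
qed

lemma f_v_eq_sum: "f_v n v t = (\<Sum>k=0..n. max (min (t + 1 - int k) (int (v (k + 1)))) 0)"
  unfolding f_v_def binomc_one by (simp add: algebra_simps)

lemma sum_split_at:
  fixes g :: "nat \<Rightarrow> 'a::comm_monoid_add"
  assumes "i \<le> n + 1"
  shows "(\<Sum>k=0..n. g k) = (\<Sum>k<i. g k) + (\<Sum>k=i..n. g k)"
proof -
  have "{0..n} = {..<i} \<union> {i..n}" using assms by auto
  moreover have "{..<i} \<inter> {i..n} = {}" by auto
  ultimately show ?thesis by (simp add: sum.union_disjoint)
qed

lemma f_v_le_cand:
  assumes "i \<le> n + 1"
  shows "f_v n v t \<le> cand n v t i"
  unfolding f_v_eq_sum cand_def sum_split_at[OF assms]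
  by (intro add_mono sum_mono) auto

lemma f_v_le_F_v: "f_v n v t \<le> F_v n v t"
proof -
  have "F_v n v t \<in> cand n v t ` {0..n+1}"
    unfolding F_v_eq_Min_cand by (rule Min_in) auto
  then show ?thesis using f_v_le_cand by auto
qed

lemma crossing_index:
  fixes g :: "nat \<Rightarrow> int"
  assumes slow: "\<And>k j. k < j \<Longrightarrow> j \<le> n \<Longrightarrow> g j \<le> g k + 1"
  obtains i where "i \<le> n + 1" "\<And>k. k < i \<Longrightarrow> 0 \<le> g k"
    "\<And>k. i \<le> k \<Longrightarrow> k \<le> n \<Longrightarrow> g k \<le> 0"
proof (cases "\<exists>k\<le>n. g k < 0")
  case True
  define i where "i = (LEAST k. k \<le> n \<and> g k < 0)"
  have i: "i \<le> n" "g i < 0"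
    using LeastI_ex[OF True] by (simp_all add: i_def)
  have "0 \<le> g k" if "k < i" for k
    using not_less_Least[of k "\<lambda>k. k \<le> n \<and> g k < 0"] that i by (simp add: i_def)
  moreover have "g k \<le> 0" if "i \<le> k" "k \<le> n" for k
  proof (cases "k = i")
    case False
    then show ?thesis using slow[of i k] that i by simp
  qed (use i in simp)
  ultimately show ?thesis using i(1) by (intro that[of i]) auto
next
  case False
  show ?thesis
  proof (rule that[of "n + 1"])
    show "0 \<le> g k" if "k < n + 1" for k using False that by (simp add: not_less)
  qed simp_all
qed

lemma GMS_slack_slow:
  assumes "GMS n v" "k < j" "j \<le> n"
  shows "int (v (j + 1)) - (t + 1 - int j) \<le> int (v (k + 1)) - (t + 1 - int k) + 1"
proof -
  have "int (v (k + 1)) - int (v (j + 1)) \<ge> int (j + 1) - int (k + 1) - 1"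
    using assms unfolding GMS_def by (metis Suc_eq_plus1 Suc_le_mono le_add2 add_less_mono1)
  then show ?thesis by simp
qed

lemma f_v_eq_cand:
  assumes "i \<le> n + 1"
    and below: "\<And>k. k < i \<Longrightarrow> t + 1 - int k \<le> int (v (k + 1))"
    and above: "\<And>k. i \<le> k \<Longrightarrow> k \<le> n \<Longrightarrow> int (v (k + 1)) \<le> t + 1 - int k"
  shows "f_v n v t = cand n v t i"
proof -
  have "(\<Sum>k<i. max (min (t + 1 - int k) (int (v (k + 1)))) 0) = (\<Sum>k<i. max (t + 1 - int k) 0)"
    using below by (intro sum.cong) (auto simp: min_def)
  moreover have "(\<Sum>k=i..n. max (min (t + 1 - int k) (int (v (k + 1)))) 0) = (\<Sum>k=i..n. int (v (k + 1)))"
    using above by (intro sum.cong refl) (simp add: min_absorb2)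
  ultimately show ?thesis
    unfolding f_v_eq_sum cand_def sum_split_at[OF assms(1)] by simp
qed

lemma f_v_eq_F_v_GMS:
  assumes "GMS n v"
  shows "f_v n v t = F_v n v t"
proof -
  obtain i where i: "i \<le> n + 1"
    "\<And>k. k < i \<Longrightarrow> 0 \<le> int (v (k + 1)) - (t + 1 - int k)"
    "\<And>k. i \<le> k \<Longrightarrow> k \<le> n \<Longrightarrow> int (v (k + 1)) - (t + 1 - int k) \<le> 0"
    using crossing_index[of n "\<lambda>k. int (v (k + 1)) - (t + 1 - int k)"]
      GMS_slack_slow[OF assms] by blast
  have "f_v n v t = cand n v t i"
    using i by (intro f_v_eq_cand) auto
  moreover have "F_v n v t \<le> cand n v t i"
    unfolding F_v_eq_Min_cand using i(1) by (intro Min_le) auto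
  ultimately show ?thesis using f_v_le_F_v[of n v t] by simp
qed

theorem mainTheorem12:
  fixes n :: nat and v :: "nat \<Rightarrow> nat"
  shows "(\<forall>t::int. t \<ge> 0 \<longrightarrow> f_v n v t \<le> F_v n v t)
         \<and> (GMS n v \<longrightarrow> (\<forall>t::int. t \<ge> 0 \<longrightarrow> f_v n v t = F_v n v t))"
  using f_v_le_F_v f_v_eq_F_v_GMS by blast

end
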